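(* Let $S$ be a 2-manifold diffeomorphic to the 2-torus. Then: (1) if $\omega_0$ is a nowhere-vanishing closed 1-form on $S$, then $[\omega_0]\ne0$ in $H^1_{\mathrm{dR}}(S)$; (2) let $X$ be a vector field on $S$ that is nonzero on a dense subset, let $\gamma_1,\gamma_2$ generate $H_1(S;\mathbb{Z})$, and let $\omega,\eta$ be closed 1-forms with $[\omega]\ne0\ne[\eta]$ and $\omega(X)=0=\eta(X)$; setting $\omega_i=\int_{\gamma_i}\omega$, $\eta_i=\int_{\gamma_i}\eta$, we have $(-\omega_2,\omega_1)\ne0\ne(-\eta_2,\eta_1)$ and $[(-\omega_2,\omega_1)]=[(-\eta_2,\eta_1)]$ in $\mathbb{P}(\mathbb{R})$; (3) with the same data, if $\tilde\gamma_1,\tilde\gamma_2$ also generate $H_1(S;\mathbb{Z})$ and $\tilde\eta_i=\int_{\tilde\gamma_i}\eta$, then $(-\omega_2,\omega_1)$ is Diophantine if and only if $(-\tilde\eta_2,\tilde\eta_1)$ is Diophantine.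
   Context: $\mathbb{P}(\mathbb{R}) = (\mathbb{R}^2\setminus\{0\})/\sim$ with $u\sim v$ iff $u,v$ are linearly dependent. A vector $v\in\mathbb{R}^2$ is Diophantine if there are $\gamma>0,\tau>1$ with $|\langle v,k\rangle|\ge\gamma\|k\|^{-\tau}$ for all $k\in\mathbb{Z}^2\setminus\{0\}$. *)

theory Defs
  imports "HOL-Analysis.Analysis"
begin

text \<open>The 2-torus T = R^2/Z^2 is modelled by Z^2-periodic objects on R^2 (points are pairs).\<close>

type_synonym pt = "real \<times> real"

definition periodic :: "(pt \<Rightarrow> 'a) \<Rightarrow> bool" where
  "periodic f \<longleftrightarrow> (\<forall>x y. \<forall>m n :: int. f (x + of_int m, y + of_int n) = f (x, y))"

fun Ck :: "nat \<Rightarrow> (pt \<Rightarrow> real) \<Rightarrow> bool" where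
  "Ck 0 f = continuous_on UNIV f"
| "Ck (Suc n) f = ((\<forall>p. f differentiable (at p)) \<and>
                    (\<forall>v. Ck n (\<lambda>p. frechet_derivative f (at p) v)))"

definition smooth_fun :: "(pt \<Rightarrow> real) \<Rightarrow> bool" where
  "smooth_fun f \<longleftrightarrow> (\<forall>n. Ck n f)"

definition pdx :: "(pt \<Rightarrow> real) \<Rightarrow> pt \<Rightarrow> real" where
  "pdx f p = frechet_derivative f (at p) (1, 0)"

definition pdy :: "(pt \<Rightarrow> real) \<Rightarrow> pt \<Rightarrow> real" where
  "pdy f p = frechet_derivative f (at p) (0, 1)"

text \<open>A smooth 1-form P dx + Q dy on the torus, stored as p \<mapsto> (P p, Q p);
  a smooth vector field on the torus is stored the same way.\<close>
definition smooth_field :: "(pt \<Rightarrow> real \<times> real) \<Rightarrow> bool" where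
  "smooth_field w \<longleftrightarrow> periodic w \<and> smooth_fun (\<lambda>p. fst (w p)) \<and> smooth_fun (\<lambda>p. snd (w p))"

definition closed_form :: "(pt \<Rightarrow> real \<times> real) \<Rightarrow> bool" where
  "closed_form w \<longleftrightarrow> smooth_field w \<and>
     (\<forall>p. pdy (\<lambda>q. fst (w q)) p = pdx (\<lambda>q. snd (w q)) p)"

definition exact_form :: "(pt \<Rightarrow> real \<times> real) \<Rightarrow> bool" where
  "exact_form w \<longleftrightarrow> (\<exists>f. periodic f \<and> smooth_fun f \<and>
     (\<forall>p. pdx f p = fst (w p) \<and> pdy f p = snd (w p)))"

definition annihilates :: "(pt \<Rightarrow> real \<times> real) \<Rightarrow> (pt \<Rightarrow> real \<times> real) \<Rightarrow> bool" where
  "annihilates w X \<longleftrightarrow> (\<forall>p. fst (w p) * fst (X p) + snd (w p) * snd (X p) = 0)"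

text \<open>H_1(T;Z) = Z^2: a class is given by the integer displacement (m,n) of a lift of a loop.
  The integral of a closed 1-form over the class (m,n) is the integral along the
  straight lift from 0 to (m,n).\<close>
definition period :: "(pt \<Rightarrow> real \<times> real) \<Rightarrow> int \<times> int \<Rightarrow> real" where
  "period w k = integral {0..1} (\<lambda>t.
      fst (w (t * of_int (fst k), t * of_int (snd k))) * of_int (fst k) +
      snd (w (t * of_int (fst k), t * of_int (snd k))) * of_int (snd k))"

text \<open>Two classes generate H_1(T;Z) = Z^2 iff they form a Z-basis, i.e. determinant \<plusminus>1.\<close>
definition hom_generators :: "int \<times> int \<Rightarrow> int \<times> int \<Rightarrow> bool" where
  "hom_generators a b \<longleftrightarrow> \<bar>fst a * snd b - snd a * fst b\<bar> = 1"

definition proj_eq :: "real \<times> real \<Rightarrow> real \<times> real \<Rightarrow> bool" where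
  "proj_eq u v \<longleftrightarrow> u \<noteq> 0 \<and> v \<noteq> 0 \<and> (\<exists>c. u = c *\<^sub>R v)"

definition diophantine :: "real \<times> real \<Rightarrow> bool" where
  "diophantine v \<longleftrightarrow> (\<exists>\<gamma>>0. \<exists>\<tau>>1. \<forall>k1 k2 :: int. (k1, k2) \<noteq> (0, 0) \<longrightarrow>
      \<bar>fst v * of_int k1 + snd v * of_int k2\<bar> \<ge> \<gamma> * norm (real_of_int k1, real_of_int k2) powr (-\<tau>))"

end

theory Submission
  imports Defs "HOL-Library.Periodic_Fun"
begin

text \<open>
  For a closed form \<open>w\<close> the radial primitive
  \<open>F p = \<integral>\<^sub>0\<^sup>1 p \<bullet> w (t p) dt\<close> has gradient \<open>w\<close> (Poincare lemma), and
  \<open>F p - c \<bullet> p\<close> is periodic, where \<open>c\<close> is the vector of periods of \<open>w\<close> along the two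
  coordinate loops. So the periods of \<open>w\<close> are linear in the homology class, and \<open>w\<close> is exact
  iff \<open>c = 0\<close>. A nowhere vanishing form is not exact, because a periodic primitive attains
  its maximum, where its gradient vanishes.

  Two forms annihilating a vector field that is nonzero on a dense set are pointwise parallel,
  so their wedge product vanishes. Integrating the wedge over the unit square and using
  periodicity to discard the exact parts shows that it equals the wedge of the period vectors,
  so the period vectors are parallel. Being Diophantine is preserved by rescaling with a
  nonzero factor and by unimodular integral changes of basis, which is what changing the
  generators of \<open>H\<^sub>1\<close> does to the vector of periods.
\<close>

section \<open>Differentiation under the integral sign and the Poincare lemma\<close>

lemma GDERIV_integral:
  fixes f :: "'a::euclidean_space \<Rightarrow> real \<Rightarrow> real" and D :: "'a \<Rightarrow> real \<Rightarrow> 'a"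
  assumes deriv: "\<And>p t. t \<in> {a..b} \<Longrightarrow> GDERIV (\<lambda>p. f p t) p :> D p t"
    and cont: "continuous_on (UNIV \<times> {a..b}) (\<lambda>(p, t). D p t)"
    and int: "\<And>p. f p integrable_on {a..b}"
  shows "GDERIV (\<lambda>p. integral {a..b} (f p)) p :> integral {a..b} (D p)"
proof -
  have "((\<lambda>p. integral (cbox a b) (f p)) has_derivative
      integral (cbox a b) (\<lambda>t. blinfun_inner_left (D p t))) (at p within UNIV)"
  proof (rule leibniz_rule)
    show "continuous_on (UNIV \<times> cbox a b) (\<lambda>(p, t). blinfun_inner_left (D p t))"
      using cont
      by (auto intro!:
          continuous_on_compose2[OF linear_continuous_on[OF bounded_linear_blinfun_inner_left]]
          simp: split_beta')
  qed (use deriv int in \<open>auto simp: gderiv_def\<close>)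
  moreover have "D p integrable_on {a..b}"
  proof (rule integrable_continuous_interval)
    show "continuous_on {a..b} (D p)"
      using continuous_on_compose2[OF cont continuous_on_Pair[OF continuous_on_const continuous_on_id],
          of p "{a..b}"] by auto
  qed
  ultimately show ?thesis
    by (simp add: gderiv_def integral_linear[OF _ bounded_linear_blinfun_inner_left, unfolded o_def])
qed

lemma GDERIV_radial_primitive:
  fixes w :: "'a::euclidean_space \<Rightarrow> 'a" and W :: "'a \<Rightarrow> 'a \<Rightarrow> 'a"
  assumes deriv: "\<And>q. (w has_derivative W q) (at q)"
    and sym: "\<And>q u v. W q u \<bullet> v = u \<bullet> W q v"
    and cont: "continuous_on UNIV (\<lambda>(q, v). W q v)"
  shows "GDERIV (\<lambda>p. integral {0..1} (\<lambda>t. p \<bullet> w (t *\<^sub>R p))) p :> w p"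
proof -
  define D where "D p t = w (t *\<^sub>R p) + t *\<^sub>R W (t *\<^sub>R p) p" for p t
  have lin: "linear (W q)" for q
    using deriv has_derivative_linear by blast
  have cw: "continuous_on UNIV w"
    using deriv by (rule has_derivative_continuous_on)
  have line: "((\<lambda>p. w (t *\<^sub>R p)) has_derivative (\<lambda>v. W (t *\<^sub>R p) (t *\<^sub>R v))) (at p within S)" for t p S
    by (rule has_derivative_compose[OF _ deriv]) (auto intro!: derivative_eq_intros)
  \<comment> \<open>By the symmetry of \<open>W\<close>, \<open>D p t\<close> is both the gradient in \<open>p\<close> of the integrand and
    the derivative in \<open>t\<close> of \<open>t *\<^sub>R w (t *\<^sub>R p)\<close>.\<close>
  have grad: "GDERIV (\<lambda>p. p \<bullet> w (t *\<^sub>R p)) p :> D p t" for p t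
    unfolding gderiv_def
  proof (rule has_derivative_eq_rhs)
    show "((\<lambda>p. p \<bullet> w (t *\<^sub>R p)) has_derivative
        (\<lambda>v. p \<bullet> W (t *\<^sub>R p) (t *\<^sub>R v) + v \<bullet> w (t *\<^sub>R p))) (at p)"
      by (rule has_derivative_inner[OF has_derivative_ident line])
    show "(\<lambda>v. p \<bullet> W (t *\<^sub>R p) (t *\<^sub>R v) + v \<bullet> w (t *\<^sub>R p)) = (\<lambda>v. v \<bullet> D p t)"
      using sym[of "t *\<^sub>R p" p] by (auto simp: D_def linear_scale[OF lin] inner_add_right inner_commute)
  qed
  have cont_D: "continuous_on (UNIV \<times> {0..1}) (\<lambda>(p, t). D p t)"
  proof -
    have "continuous_on (UNIV \<times> {0..1}) (\<lambda>z. w (snd z *\<^sub>R fst z))"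
      by (rule continuous_on_compose2[OF cw]) (auto intro!: continuous_intros)
    moreover have "continuous_on (UNIV \<times> {0..1}) (\<lambda>z. W (snd z *\<^sub>R fst z) (fst z))"
      using continuous_on_compose2[OF cont, of "UNIV \<times> {0..1}" "\<lambda>z. (snd z *\<^sub>R fst z, fst z)"]
      by (simp add: continuous_intros)
    ultimately show ?thesis
      unfolding D_def split_beta' by (intro continuous_intros)
  qed
  have int: "(\<lambda>t. p \<bullet> w (t *\<^sub>R p)) integrable_on {0..1}" for p
    by (intro integrable_continuous_interval continuous_intros continuous_on_compose2[OF cw]) auto
  have ftc: "(D p has_integral w p) {0..1}"
  proof -
    have "(D p has_integral (1 *\<^sub>R w (1 *\<^sub>R p) - 0 *\<^sub>R w (0 *\<^sub>R p))) {0..1}"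
    proof (rule fundamental_theorem_of_calculus)
      show "((\<lambda>t. t *\<^sub>R w (t *\<^sub>R p)) has_vector_derivative D p t) (at t within {0..1})" for t
        unfolding has_vector_derivative_def
      proof (rule has_derivative_eq_rhs)
        show "((\<lambda>t. t *\<^sub>R w (t *\<^sub>R p)) has_derivative
            (\<lambda>h. t *\<^sub>R W (t *\<^sub>R p) (h *\<^sub>R p) + h *\<^sub>R w (t *\<^sub>R p)))
            (at t within {0..1})"
          by (rule has_derivative_scaleR[OF has_derivative_ident has_derivative_compose[OF _ deriv]])
            (auto intro!: derivative_eq_intros)
      qed (auto simp: D_def linear_scale[OF lin] algebra_simps)
    qed simp
    then show ?thesis by simp
  qed
  show ?thesis
    using GDERIV_integral[OF grad cont_D int, of p] unfolding integral_unique[OF ftc] .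
qed

lemma smooth_fun_continuous_on: "smooth_fun f \<Longrightarrow> continuous_on S f"
  using continuous_on_subset[of UNIV f S] by (simp add: smooth_fun_def) (metis Ck.simps(1))

lemma smooth_fun_GDERIV:
  assumes "smooth_fun f"
  shows "GDERIV f p :> (pdx f p, pdy f p)"
proof -
  have deriv: "(f has_derivative frechet_derivative f (at p)) (at p)"
    using assms frechet_derivative_works unfolding smooth_fun_def by (metis Ck.simps(2))
  have "frechet_derivative f (at p) v = v \<bullet> (pdx f p, pdy f p)" for v
  proof -
    have lin: "linear (frechet_derivative f (at p))"
      using deriv has_derivative_linear by blast
    have "frechet_derivative f (at p) v =
        frechet_derivative f (at p) (fst v *\<^sub>R (1, 0) + snd v *\<^sub>R (0, 1))"
      by (simp add: prod_eq_iff)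
    also have "\<dots> = v \<bullet> (pdx f p, pdy f p)"
      unfolding linear_add[OF lin] linear_scale[OF lin] by (simp add: pdx_def pdy_def inner_prod_def)
    finally show ?thesis .
  qed
  then have "frechet_derivative f (at p) = (\<lambda>v. v \<bullet> (pdx f p, pdy f p))"
    by (rule ext)
  with deriv show ?thesis
    unfolding gderiv_def by simp
qed

lemma continuous_on_pdx: "smooth_fun f \<Longrightarrow> continuous_on S (pdx f)"
  using continuous_on_subset[of UNIV "pdx f" S]
  by (simp add: smooth_fun_def pdx_def) (metis Ck.simps)

lemma continuous_on_pdy: "smooth_fun f \<Longrightarrow> continuous_on S (pdy f)"
  using continuous_on_subset[of UNIV "pdy f" S]
  by (simp add: smooth_fun_def pdy_def) (metis Ck.simps)

lemma GDERIV_imp_pdx_pdy: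
  assumes "GDERIV f p :> D"
  shows "pdx f p = fst D" "pdy f p = snd D"
  using frechet_derivative_at[OF assms[unfolded gderiv_def], symmetric]
  by (auto simp: pdx_def pdy_def inner_prod_def)

lemma Ck_lincomb: "Ck n f \<Longrightarrow> Ck n g \<Longrightarrow> Ck n (\<lambda>p. a * f p + b * g p)"
proof (induction n arbitrary: f g)
  case 0
  then show ?case by (auto intro!: continuous_intros)
next
  case (Suc n)
  have deriv: "((\<lambda>p. a * f p + b * g p) has_derivative
      (\<lambda>v. a * frechet_derivative f (at p) v + b * frechet_derivative g (at p) v)) (at p)" for p
    using Suc.prems by (metis (no_types) Ck.simps(2) frechet_derivative_works has_derivative_add
        has_derivative_mult_right)
  have "Ck n (\<lambda>p. frechet_derivative (\<lambda>p. a * f p + b * g p) (at p) v)" for v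
  proof -
    have "Ck n (\<lambda>p. frechet_derivative f (at p) v)" "Ck n (\<lambda>p. frechet_derivative g (at p) v)"
      using Suc.prems by (simp_all del: split_paired_All)
    then show ?thesis
      unfolding frechet_derivative_at[OF deriv, symmetric] by (rule Suc.IH)
  qed
  with deriv show ?case
    by (auto simp: differentiable_def)
qed

lemma smooth_fun_if_GDERIV:
  assumes grad: "\<And>p. GDERIV F p :> (P p, Q p)" and "smooth_fun P" "smooth_fun Q"
  shows "smooth_fun F"
  unfolding smooth_fun_def
proof
  fix n
  show "Ck n F"
  proof (cases n)
    case 0
    have "continuous_on UNIV F"
      using grad unfolding gderiv_def by (rule has_derivative_continuous_on)
    with 0 show ?thesis by simp
  next
    case (Suc m)
    have "F differentiable (at p)" for p
      using grad unfolding gderiv_def differentiable_def by blast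
    moreover have "frechet_derivative F (at p) v = fst v * P p + snd v * Q p" for p v
      using frechet_derivative_at[OF grad[unfolded gderiv_def], symmetric] by (simp add: inner_prod_def)
    ultimately show ?thesis
      using assms Suc unfolding smooth_fun_def by (simp add: Ck_lincomb del: split_paired_All)
  qed
qed

lemma periodic_attains_max:
  fixes f :: "pt \<Rightarrow> real"
  assumes "periodic f" "continuous_on UNIV f"
  obtains p where "\<And>q. f q \<le> f p"
proof -
  obtain p where p: "\<And>q. q \<in> cbox (0, 0) (1, 1) \<Longrightarrow> f q \<le> f p"
    using continuous_attains_sup[of "cbox (0, 0) (1, 1)" f] continuous_on_subset[OF assms(2)]
    by (fastforce simp: cbox_Pair_eq compact_Times)
  have "f (x, y) \<le> f p" for x y
  proof -
    have "f (x, y) = f (frac x + of_int \<lfloor>x\<rfloor>, frac y + of_int \<lfloor>y\<rfloor>)"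
      by (simp add: frac_def)
    also have "\<dots> = f (frac x, frac y)"
      using assms(1) unfolding periodic_def by blast
    also have "\<dots> \<le> f p"
      by (rule p) (auto simp: cbox_Pair_eq frac_lt_1 less_imp_le)
    finally show ?thesis .
  qed
  then show ?thesis
    using that by (metis prod.collapse)
qed

lemma exact_form_vanishes:
  assumes "exact_form w"
  obtains p where "w p = 0"
proof -
  obtain f where f: "periodic f" "smooth_fun f" "\<And>p. pdx f p = fst (w p) \<and> pdy f p = snd (w p)"
    using assms unfolding exact_form_def by blast
  obtain p where p: "\<And>q. f q \<le> f p"
    using periodic_attains_max[OF f(1) smooth_fun_continuous_on[OF f(2)]] by blast
  have "(\<lambda>h. h \<bullet> (pdx f p, pdy f p)) = (\<lambda>h. 0)"
    using has_derivative_local_max[OF smooth_fun_GDERIV[OF f(2), unfolded gderiv_def]] p by simp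
  then have "(pdx f p, pdy f p) = 0"
    by (metis inner_eq_zero_iff)
  with f(3) show ?thesis
    using that by (simp add: prod_eq_iff)
qed

lemma periodic_if_unit_shifts:
  assumes "\<And>x y. f (x + 1, y) = f (x, y)" "\<And>x y. f (x, y + 1) = f (x, y)"
  shows "periodic f"
  unfolding periodic_def
proof (intro allI)
  fix x y :: real and m n :: int
  interpret x_shift: periodic_fun_simple' "\<lambda>x. f (x, y)"
    by standard (rule assms(1))
  interpret y_shift: periodic_fun_simple' "\<lambda>y. f (x + of_int m, y)"
    by standard (rule assms(2))
  have "f (x + of_int m, y + of_int n) = f (x + of_int m, y)"
    by (rule y_shift.plus_of_int)
  also have "\<dots> = f (x, y)"
    by (rule x_shift.plus_of_int)
  finally show "f (x + of_int m, y + of_int n) = f (x, y)" .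
qed

section \<open>Periods of closed forms\<close>

lemma closed_form_continuous_on:
  assumes "closed_form w"
  shows "continuous_on S w"
proof -
  have "continuous_on S (\<lambda>p. (fst (w p), snd (w p)))"
    using assms unfolding closed_form_def smooth_field_def
    by (intro continuous_on_Pair smooth_fun_continuous_on) auto
  then show ?thesis
    by simp
qed

definition radial_primitive :: "(pt \<Rightarrow> real \<times> real) \<Rightarrow> pt \<Rightarrow> real" where
  "radial_primitive w p = integral {0..1} (\<lambda>t. p \<bullet> w (t *\<^sub>R p))"

lemma period_eq_radial_primitive:
  "period w k = radial_primitive w (of_int (fst k), of_int (snd k))"
  by (simp add: period_def radial_primitive_def inner_prod_def algebra_simps)

lemma closed_form_GDERIV_radial_primitive:
  assumes "closed_form w"
  shows "GDERIV (radial_primitive w) p :> w p"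
proof -
  define P where "P = (\<lambda>q. fst (w q))"
  define Q where "Q = (\<lambda>q. snd (w q))"
  have P: "smooth_fun P" and Q: "smooth_fun Q" and curl: "\<And>q. pdy P q = pdx Q q"
    using assms by (auto simp: closed_form_def smooth_field_def P_def Q_def)
  define W where "W q v = (v \<bullet> (pdx P q, pdy P q), v \<bullet> (pdx Q q, pdy Q q))" for q v
  have "((\<lambda>q. (P q, Q q)) has_derivative W q) (at q)" for q
    using smooth_fun_GDERIV[OF P] smooth_fun_GDERIV[OF Q] unfolding gderiv_def W_def
    by (rule has_derivative_Pair)
  then have "(w has_derivative W q) (at q)" for q
    by (simp add: P_def Q_def)
  moreover have "W q u \<bullet> v = u \<bullet> W q v" for q u v
    using curl[of q] by (simp add: W_def inner_prod_def algebra_simps)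
  moreover have "continuous_on UNIV (\<lambda>(q, v). W q v)"
  proof -
    have on_fst: "continuous_on UNIV (\<lambda>z. d (fst z :: pt))"
      if "continuous_on UNIV d" for d :: "pt \<Rightarrow> real"
      using continuous_on_compose2[OF that continuous_on_fst[OF continuous_on_id]] by simp
    show ?thesis
      unfolding W_def split_beta' inner_prod_def
      by (intro continuous_intros on_fst continuous_on_pdx continuous_on_pdy P Q)
  qed
  ultimately show ?thesis
    unfolding radial_primitive_def by (rule GDERIV_radial_primitive)
qed

lemma radial_primitive_add_lattice:
  assumes "closed_form w"
  shows "radial_primitive w (p + (of_int m, of_int n)) =
    radial_primitive w p + radial_primitive w (of_int m, of_int n)"
proof -
  define F s where "F = radial_primitive w" and "s = (of_int m :: real, of_int n :: real)"
  have dF: "GDERIV F q :> w q" for q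
    unfolding F_def by (rule closed_form_GDERIV_radial_primitive[OF assms])
  have dFs: "GDERIV (\<lambda>q. F (q + s)) q :> w (q + s)" for q
    using has_derivative_compose[OF has_derivative_add[OF has_derivative_ident has_derivative_const]
        dF[unfolded gderiv_def]]
    by (simp add: gderiv_def)
  have ws: "w (q + s) = w q" for q
    using assms unfolding closed_form_def smooth_field_def periodic_def s_def
    by (metis add_Pair prod.collapse)
  have "GDERIV (\<lambda>q. F (q + s) - F q) q :> 0" for q
    using GDERIV_diff[OF dFs dF, of q] by (simp add: ws)
  then obtain c where "\<And>q. F (q + s) - F q = c"
    using has_derivative_zero_constant[of UNIV "\<lambda>q. F (q + s) - F q"] by (auto simp: gderiv_def)
  moreover have "F 0 = 0"
    by (simp add: F_def radial_primitive_def)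
  ultimately show ?thesis
    by (metis F_def add.commute add.left_neutral diff_add_cancel s_def)
qed

definition periods :: "(pt \<Rightarrow> real \<times> real) \<Rightarrow> real \<times> real" where
  "periods w = (period w (1, 0), period w (0, 1))"

lemma periodic_radial_primitive_minus_periods:
  assumes "closed_form w"
  shows "periodic (\<lambda>p. radial_primitive w p - periods w \<bullet> p)"
proof (rule periodic_if_unit_shifts)
  show "radial_primitive w (x + 1, y) - periods w \<bullet> (x + 1, y) =
      radial_primitive w (x, y) - periods w \<bullet> (x, y)" for x y
    using radial_primitive_add_lattice[OF assms, of "(x, y)" 1 0]
    by (simp add: periods_def period_eq_radial_primitive inner_prod_def algebra_simps)
  show "radial_primitive w (x, y + 1) - periods w \<bullet> (x, y + 1) =
      radial_primitive w (x, y) - periods w \<bullet> (x, y)" for x y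
    using radial_primitive_add_lattice[OF assms, of "(x, y)" 0 1]
    by (simp add: periods_def period_eq_radial_primitive inner_prod_def algebra_simps)
qed

lemma GDERIV_radial_primitive_minus_periods:
  assumes "closed_form w"
  shows "GDERIV (\<lambda>p. radial_primitive w p - periods w \<bullet> p) p :> w p - periods w"
proof -
  have "GDERIV (\<lambda>p. periods w \<bullet> p) p :> periods w"
    unfolding gderiv_def by (auto intro!: derivative_eq_intros simp: inner_commute)
  then show ?thesis
    by (rule GDERIV_diff[OF closed_form_GDERIV_radial_primitive[OF assms]])
qed

lemma period_eq_inner_periods:
  assumes "closed_form w"
  shows "period w k = periods w \<bullet> (of_int (fst k), of_int (snd k))"
proof -
  define G where "G p = radial_primitive w p - periods w \<bullet> p" for p
  have "G (0 + of_int (fst k), 0 + of_int (snd k)) = G (0, 0)"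
    using periodic_radial_primitive_minus_periods[OF assms] unfolding periodic_def G_def by blast
  moreover have "G (0, 0) = 0"
    by (simp add: G_def radial_primitive_def zero_prod_def[symmetric])
  ultimately show ?thesis
    by (simp add: G_def period_eq_radial_primitive)
qed

lemma exact_form_if_periods_eq_0:
  assumes "closed_form w" "periods w = 0"
  shows "exact_form w"
proof -
  have "periodic (radial_primitive w)"
    using periodic_radial_primitive_minus_periods[OF assms(1)] assms(2) by simp
  moreover have grad: "GDERIV (radial_primitive w) p :> (fst (w p), snd (w p))" for p
    using closed_form_GDERIV_radial_primitive[OF assms(1)] by simp
  moreover have "smooth_fun (radial_primitive w)"
    using assms(1) by (intro smooth_fun_if_GDERIV[OF grad]) (auto simp: closed_form_def smooth_field_def)
  ultimately show ?thesis
    unfolding exact_form_def using GDERIV_imp_pdx_pdy[OF grad] by auto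
qed

section \<open>The wedge product of two closed forms\<close>

lemma GDERIV_imp_partial_vector_derivatives:
  assumes "GDERIV u (x, y) :> D"
  shows "((\<lambda>x. u (x, y)) has_vector_derivative fst D) (at x within S)"
    "((\<lambda>y. u (x, y)) has_vector_derivative snd D) (at y within S)"
proof -
  have "((\<lambda>x. (x, y)) has_derivative (\<lambda>h. (h, 0))) (at x within S)"
    "((\<lambda>y. (x, y)) has_derivative (\<lambda>h. (0, h))) (at y within S)"
    by (auto intro!: derivative_eq_intros)
  from this[THEN has_derivative_compose, OF assms[unfolded gderiv_def]] show
    "((\<lambda>x. u (x, y)) has_vector_derivative fst D) (at x within S)"
    "((\<lambda>y. u (x, y)) has_vector_derivative snd D) (at y within S)"
    by (simp_all add: has_vector_derivative_def inner_prod_def)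
qed

lemma has_integral_GDERIV_periodic:
  assumes "periodic u" "\<And>p. GDERIV u p :> D p"
  shows "((\<lambda>x. fst (D (x, y))) has_integral 0) {0..1}"
    "((\<lambda>y. snd (D (x, y))) has_integral 0) {0..1}"
proof -
  have "u (0 + of_int 1, y + of_int 0) = u (0, y)" "u (x + of_int 0, 0 + of_int 1) = u (x, 0)"
    using assms(1) unfolding periodic_def by blast+
  moreover have "((\<lambda>x. fst (D (x, y))) has_integral (u (1, y) - u (0, y))) {0..1}"
    by (rule fundamental_theorem_of_calculus)
      (auto intro: GDERIV_imp_partial_vector_derivatives(1)[OF assms(2)])
  moreover have "((\<lambda>y. snd (D (x, y))) has_integral (u (x, 1) - u (x, 0))) {0..1}"
    by (rule fundamental_theorem_of_calculus)
      (auto intro: GDERIV_imp_partial_vector_derivatives(2)[OF assms(2)])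
  ultimately show "((\<lambda>x. fst (D (x, y))) has_integral 0) {0..1}"
    "((\<lambda>y. snd (D (x, y))) has_integral 0) {0..1}"
    by simp_all
qed

lemma closed_form_has_integral_periods:
  assumes "closed_form w"
  shows "((\<lambda>x. fst (w (x, y))) has_integral fst (periods w)) {0..1}"
    "((\<lambda>y. snd (w (x, y))) has_integral snd (periods w)) {0..1}"
proof -
  note zero = has_integral_GDERIV_periodic[OF periodic_radial_primitive_minus_periods[OF assms]
      GDERIV_radial_primitive_minus_periods[OF assms]]
  note const = has_integral_const_real[where a = 0 and b = 1]
  show "((\<lambda>x. fst (w (x, y))) has_integral fst (periods w)) {0..1}"
    using has_integral_add[OF zero(1) const[of "fst (periods w)"]] by simp
  show "((\<lambda>y. snd (w (x, y))) has_integral snd (periods w)) {0..1}"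
    using has_integral_add[OF zero(2) const[of "snd (periods w)"]] by simp
qed

lemma integral_unit_square_if_line_integrals:
  fixes U :: "real \<times> real \<Rightarrow> 'a::banach"
  assumes "continuous_on UNIV U"
  shows "(\<And>x. ((\<lambda>y. U (x, y)) has_integral a) {0..1}) \<Longrightarrow> integral (cbox (0, 0) (1, 1)) U = a"
    and "(\<And>y. ((\<lambda>x. U (x, y)) has_integral a) {0..1}) \<Longrightarrow> integral (cbox (0, 0) (1, 1)) U = a"
proof -
  have box: "integral (cbox (0, 0) (1, 1)) U = integral {0..1} (\<lambda>x. integral {0..1} (\<lambda>y. U (x, y)))"
    using integral_prod_continuous[OF continuous_on_subset[OF assms]] by simp
  show "integral (cbox (0, 0) (1, 1)) U = a" if "\<And>x. ((\<lambda>y. U (x, y)) has_integral a) {0..1}"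
    unfolding box by (simp add: integral_unique[OF that])
  show "integral (cbox (0, 0) (1, 1)) U = a" if "\<And>y. ((\<lambda>x. U (x, y)) has_integral a) {0..1}"
    using integral_swap_continuous[of 0 0 1 1 "\<lambda>x y. U (x, y)"] continuous_on_subset[OF assms]
    unfolding box by (simp add: integral_unique[OF that])
qed

definition wedge :: "real \<times> real \<Rightarrow> real \<times> real \<Rightarrow> real" where
  "wedge u v = fst u * snd v - snd u * fst v"

lemma integral_wedge_eq_wedge_periods:
  assumes w: "closed_form w" and e: "closed_form e"
  shows "integral (cbox (0, 0) (1, 1)) (\<lambda>p. wedge (w p) (e p)) = wedge (periods w) (periods e)"
proof -
  define P where "P = (\<lambda>q. fst (w q))"
  define Q where "Q = (\<lambda>q. snd (w q))"
  have P: "smooth_fun P" and Q: "smooth_fun Q" and curl: "\<And>q. pdy P q = pdx Q q"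
    using w by (auto simp: closed_form_def smooth_field_def P_def Q_def)
  define c d where "c = periods w" and "d = periods e"
  define g where "g p = radial_primitive e p - d \<bullet> p" for p
  have g_periodic: "periodic g" and dg: "\<And>p. GDERIV g p :> e p - d"
    unfolding g_def d_def
    by (auto intro: periodic_radial_primitive_minus_periods GDERIV_radial_primitive_minus_periods e)
  define DQg where "DQg p = Q p *\<^sub>R (e p - d) + g p *\<^sub>R (pdx Q p, pdy Q p)" for p
  define DPg where "DPg p = P p *\<^sub>R (e p - d) + g p *\<^sub>R (pdx P p, pdy P p)" for p
  have dQg: "GDERIV (\<lambda>p. Q p * g p) p :> DQg p" for p
    unfolding DQg_def by (rule GDERIV_mult[OF smooth_fun_GDERIV[OF Q] dg])
  have dPg: "GDERIV (\<lambda>p. P p * g p) p :> DPg p" for p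
    unfolding DPg_def by (rule GDERIV_mult[OF smooth_fun_GDERIV[OF P] dg])
  have periodic_mult: "periodic (\<lambda>p. f p * g p)" if "periodic f" for f :: "pt \<Rightarrow> real"
    using that g_periodic by (simp add: periodic_def)
  \<comment> \<open>By closedness of \<open>w\<close>, the wedge is \<open>U - V\<close>. Along horizontal lines \<open>U\<close> integrates to
    \<open>d\<^sub>2 c\<^sub>1\<close> and along vertical lines \<open>V\<close> to \<open>d\<^sub>1 c\<^sub>2\<close>: the corrections are partial derivatives
    of the periodic functions \<open>Q g\<close> and \<open>P g\<close>.\<close>
  define U where "U p = snd d * P p - fst (DQg p)" for p
  define V where "V p = fst d * Q p - snd (DPg p)" for p
  have wedge_eq: "wedge (w p) (e p) = U p - V p" for p
    using curl[of p] by (simp add: wedge_def U_def V_def DQg_def DPg_def P_def Q_def algebra_simps)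
  have "continuous_on UNIV g"
    using dg unfolding gderiv_def by (rule has_derivative_continuous_on)
  moreover note closed_form_continuous_on[OF e] smooth_fun_continuous_on[OF P]
    smooth_fun_continuous_on[OF Q] continuous_on_pdx[OF Q] continuous_on_pdy[OF P]
  ultimately have cont_U: "continuous_on UNIV U" and cont_V: "continuous_on UNIV V"
    unfolding U_def V_def DQg_def DPg_def by (auto intro!: continuous_intros)
  have "periodic P" "periodic Q"
    using w by (auto simp: closed_form_def smooth_field_def periodic_def P_def Q_def)
  then have Qg0: "((\<lambda>x. fst (DQg (x, y))) has_integral 0) {0..1}"
    and Pg0: "((\<lambda>y. snd (DPg (x, y))) has_integral 0) {0..1}" for x y
    by (auto intro: has_integral_GDERIV_periodic[OF periodic_mult] dQg dPg)
  have int_U: "((\<lambda>x. U (x, y)) has_integral snd d * fst c) {0..1}" for y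
    using has_integral_diff[OF has_integral_mult_right[OF closed_form_has_integral_periods(1)[OF w]] Qg0]
    by (simp add: U_def P_def c_def)
  have int_V: "((\<lambda>y. V (x, y)) has_integral fst d * snd c) {0..1}" for x
    using has_integral_diff[OF has_integral_mult_right[OF closed_form_has_integral_periods(2)[OF w]] Pg0]
    by (simp add: V_def Q_def c_def)
  have "integral (cbox (0, 0) (1, 1)) (\<lambda>p. U p - V p) =
      integral (cbox (0, 0) (1, 1)) U - integral (cbox (0, 0) (1, 1)) V"
    using cont_U cont_V by (intro integral_diff integrable_continuous) (auto intro: continuous_on_subset)
  also have "\<dots> = snd d * fst c - fst d * snd c"
    using integral_unit_square_if_line_integrals(2)[OF cont_U int_U]
      integral_unit_square_if_line_integrals(1)[OF cont_V int_V] by simp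
  finally show ?thesis
    unfolding wedge_eq by (simp add: wedge_def c_def d_def)
qed

lemma wedge_eq_0_if_orthogonal:
  assumes "u \<bullet> x = 0" "v \<bullet> x = 0" "x \<noteq> 0"
  shows "wedge u v = 0"
proof -
  have "wedge u v * fst x = snd v * (u \<bullet> x) - snd u * (v \<bullet> x)"
    "wedge u v * snd x = fst u * (v \<bullet> x) - fst v * (u \<bullet> x)"
    by (simp_all add: wedge_def inner_prod_def algebra_simps)
  with assms show ?thesis
    by (auto simp: prod_eq_iff)
qed

lemma wedge_eq_0_if_annihilates_dense:
  assumes "continuous_on UNIV w" "continuous_on UNIV e" "closure {p. X p \<noteq> 0} = UNIV"
    and "annihilates w X" "annihilates e X"
  shows "wedge (w p) (e p) = 0"
proof -
  have "{p. X p \<noteq> 0} \<subseteq> {p. wedge (w p) (e p) = 0}"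
  proof
    fix p
    have "w p \<bullet> X p = 0" "e p \<bullet> X p = 0"
      using assms(4,5) by (simp_all add: annihilates_def inner_prod_def del: split_paired_All)
    then show "p \<in> {p. X p \<noteq> 0} \<Longrightarrow> p \<in> {p. wedge (w p) (e p) = 0}"
      by (simp add: wedge_eq_0_if_orthogonal)
  qed
  moreover have "closed {p. wedge (w p) (e p) = 0}"
    using assms(1,2) unfolding wedge_def by (intro closed_Collect_eq continuous_intros)
  ultimately have "closure {p. X p \<noteq> 0} \<subseteq> {p. wedge (w p) (e p) = 0}"
    by (rule closure_minimal)
  with assms(3) show ?thesis
    by auto
qed

lemma scaleR_if_wedge_eq_0:
  assumes "wedge u v = 0" "v \<noteq> 0"
  obtains l where "u = l *\<^sub>R v"
proof (cases "fst v = 0")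
  case True
  with assms show ?thesis
    using that[of "snd u / snd v"] by (auto simp: wedge_def prod_eq_iff)
next
  case False
  with assms show ?thesis
    using that[of "fst u / fst v"] by (auto simp: wedge_def prod_eq_iff field_simps)
qed

lemma periods_parallel_if_annihilates_dense:
  assumes "closure {p. X p \<noteq> 0} = UNIV" "closed_form \<omega>" "closed_form \<eta>"
    "\<not> exact_form \<omega>" "\<not> exact_form \<eta>" "annihilates \<omega> X" "annihilates \<eta> X"
  obtains l where "l \<noteq> 0" "periods \<omega> = l *\<^sub>R periods \<eta>"
proof -
  have "wedge (\<omega> p) (\<eta> p) = 0" for p
    using assms by (intro wedge_eq_0_if_annihilates_dense closed_form_continuous_on)
  then have "wedge (periods \<omega>) (periods \<eta>) = 0"
    using integral_wedge_eq_wedge_periods[OF assms(2,3)] by simp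
  moreover have "periods \<omega> \<noteq> 0" "periods \<eta> \<noteq> 0"
    using assms(2-5) exact_form_if_periods_eq_0 by blast+
  ultimately obtain l where "periods \<omega> = l *\<^sub>R periods \<eta>"
    using scaleR_if_wedge_eq_0 by blast
  with \<open>periods \<omega> \<noteq> 0\<close> show ?thesis
    using that by fastforce
qed

section \<open>Diophantine vectors\<close>

lemma diophantine_scaleR:
  assumes "diophantine u" "l \<noteq> 0"
  shows "diophantine (l *\<^sub>R u)"
proof -
  obtain \<gamma> \<tau> where "\<gamma> > 0" "\<tau> > 1" and bound: "\<And>k1 k2. (k1, k2) \<noteq> (0, 0) \<Longrightarrow>
      \<gamma> * norm (real_of_int k1, real_of_int k2) powr (- \<tau>) \<le> \<bar>fst u * of_int k1 + snd u * of_int k2\<bar>"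
    using assms(1) unfolding diophantine_def by auto
  have "\<bar>l\<bar> * \<gamma> * norm (real_of_int k1, real_of_int k2) powr (- \<tau>) \<le>
      \<bar>fst (l *\<^sub>R u) * of_int k1 + snd (l *\<^sub>R u) * of_int k2\<bar>" if "(k1, k2) \<noteq> (0, 0)" for k1 k2
    using mult_left_mono[OF bound[OF that], of "\<bar>l\<bar>"]
    by (simp add: abs_mult[symmetric] algebra_simps)
  moreover have "\<bar>l\<bar> * \<gamma> > 0"
    using \<open>\<gamma> > 0\<close> assms(2) by simp
  ultimately show ?thesis
    unfolding diophantine_def using \<open>\<tau> > 1\<close> by blast
qed

lemma diophantine_scaleR_iff: "l \<noteq> 0 \<Longrightarrow> diophantine (l *\<^sub>R u) \<longleftrightarrow> diophantine u"
  using diophantine_scaleR[of "l *\<^sub>R u" "inverse l"] diophantine_scaleR[of u l] by auto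

lemma norm_int_transform_le:
  fixes a b e f k1 k2 :: int
  shows "norm (real_of_int (a * k1 + b * k2), real_of_int (e * k1 + f * k2)) \<le>
    (\<bar>a\<bar> + \<bar>b\<bar> + \<bar>e\<bar> + \<bar>f\<bar>) * norm (real_of_int k1, real_of_int k2)"
proof -
  define N where "N = norm (real_of_int k1, real_of_int k2)"
  have k: "\<bar>real_of_int k1\<bar> \<le> N" "\<bar>real_of_int k2\<bar> \<le> N"
    unfolding N_def by (metis norm_fst_le norm_snd_le fst_conv snd_conv real_norm_def)+
  have row: "\<bar>real_of_int (c * k1 + d * k2)\<bar> \<le> (\<bar>c\<bar> + \<bar>d\<bar>) * N" for c d :: int
  proof -
    have "\<bar>real_of_int (c * k1 + d * k2)\<bar> \<le>
        \<bar>real_of_int c\<bar> * \<bar>real_of_int k1\<bar> + \<bar>real_of_int d\<bar> * \<bar>real_of_int k2\<bar>"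
      by (metis abs_mult abs_triangle_ineq of_int_add of_int_mult)
    also have "\<dots> \<le> (\<bar>c\<bar> + \<bar>d\<bar>) * N"
      using mult_left_mono[OF k(1), of "\<bar>real_of_int c\<bar>"] mult_left_mono[OF k(2), of "\<bar>real_of_int d\<bar>"]
      by (simp add: algebra_simps)
    finally show ?thesis .
  qed
  show ?thesis
    using norm_Pair_le[of "real_of_int (a * k1 + b * k2)" "real_of_int (e * k1 + f * k2)"]
      row[of a b] row[of e f]
    by (simp add: N_def algebra_simps)
qed

lemma diophantine_int_transform:
  fixes a b e f :: int
  assumes "diophantine u" "a * f - b * e \<noteq> 0"
  shows "diophantine (fst u * of_int a + snd u * of_int e, fst u * of_int b + snd u * of_int f)"
proof -
  obtain \<gamma> \<tau> where "\<gamma> > 0" "\<tau> > 1" and bound: "\<And>k1 k2. (k1, k2) \<noteq> (0, 0) \<Longrightarrow>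
      \<gamma> * norm (real_of_int k1, real_of_int k2) powr (- \<tau>) \<le> \<bar>fst u * of_int k1 + snd u * of_int k2\<bar>"
    using assms(1) unfolding diophantine_def by auto
  define K :: real where "K = \<bar>a\<bar> + \<bar>b\<bar> + \<bar>e\<bar> + \<bar>f\<bar>"
  have "K > 0"
    unfolding K_def using assms(2) by (cases "a = 0"; cases "b = 0") auto
  have "\<gamma> * K powr (- \<tau>) * norm (real_of_int k1, real_of_int k2) powr (- \<tau>) \<le>
      \<bar>(fst u * of_int a + snd u * of_int e) * of_int k1 +
        (fst u * of_int b + snd u * of_int f) * of_int k2\<bar>"
    if k: "(k1, k2) \<noteq> (0, 0)" for k1 k2
  proof -
    define m1 m2 where "m1 = a * k1 + b * k2" and "m2 = e * k1 + f * k2"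
    have "(a * f - b * e) * k1 = f * m1 - b * m2" "(a * f - b * e) * k2 = a * m2 - e * m1"
      by (simp_all add: m1_def m2_def algebra_simps)
    then have m: "(m1, m2) \<noteq> (0, 0)"
      using k assms(2) by auto
    then have "norm (real_of_int m1, real_of_int m2) > 0"
      by (simp add: zero_prod_def)
    moreover have "norm (real_of_int m1, real_of_int m2) \<le> K * norm (real_of_int k1, real_of_int k2)"
      unfolding m1_def m2_def K_def by (rule norm_int_transform_le)
    ultimately have "\<gamma> * (K * norm (real_of_int k1, real_of_int k2)) powr (- \<tau>) \<le>
        \<gamma> * norm (real_of_int m1, real_of_int m2) powr (- \<tau>)"
      using \<open>\<gamma> > 0\<close> \<open>\<tau> > 1\<close> by (intro mult_left_mono powr_mono2') auto
    also have "\<dots> \<le> \<bar>fst u * of_int m1 + snd u * of_int m2\<bar>"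
      by (rule bound[OF m])
    also have "\<dots> = \<bar>(fst u * of_int a + snd u * of_int e) * of_int k1 +
        (fst u * of_int b + snd u * of_int f) * of_int k2\<bar>"
      unfolding m1_def m2_def of_int_add of_int_mult by argo
    finally show ?thesis
      using \<open>K > 0\<close> by (simp add: powr_mult mult.assoc)
  qed
  moreover have "\<gamma> * K powr (- \<tau>) > 0"
    using \<open>\<gamma> > 0\<close> \<open>K > 0\<close> by simp
  ultimately show ?thesis
    unfolding diophantine_def fst_conv snd_conv using \<open>\<tau> > 1\<close> by blast
qed

lemma diophantine_int_transform_iff:
  fixes a b e f :: int
  assumes "\<bar>a * f - b * e\<bar> = 1"
  shows "diophantine (fst u * of_int a + snd u * of_int e, fst u * of_int b + snd u * of_int f) \<longleftrightarrow>
    diophantine u" (is "diophantine ?v \<longleftrightarrow> _")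
proof
  assume "diophantine u"
  then show "diophantine ?v"
    using assms by (intro diophantine_int_transform) auto
next
  assume "diophantine ?v"
  define d where "d = a * f - b * e"
  have "d = 1 \<or> d = -1"
    using assms unfolding d_def by linarith
  then have dd: "d * d = 1"
    by auto
  have "(d * f) * (d * a) - (- d * b) * (- d * e) = d * d * d"
    unfolding d_def by algebra
  then have "(d * f) * (d * a) - (- d * b) * (- d * e) \<noteq> 0"
    using dd by auto
  \<comment> \<open>\<open>d * (f, -b; -e, a)\<close> is the inverse matrix, and it is integral since \<open>d = \<plusminus>1\<close>.\<close>
  from diophantine_int_transform[OF \<open>diophantine ?v\<close> this]
  have "diophantine (fst ?v * of_int (d * f) + snd ?v * of_int (- d * e),
      fst ?v * of_int (- d * b) + snd ?v * of_int (d * a))" .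
  moreover have "(fst ?v * of_int (d * f) + snd ?v * of_int (- d * e),
      fst ?v * of_int (- d * b) + snd ?v * of_int (d * a)) =
      (fst u * of_int (d * d), snd u * of_int (d * d))"
    unfolding d_def prod_eq_iff fst_conv snd_conv of_int_mult of_int_diff of_int_minus
    by (intro conjI; algebra)
  ultimately show "diophantine u"
    using dd by simp
qed

lemma period_pair_eq:
  assumes "closed_form w"
  shows "(- period w g2, period w g1) =
    (fst (periods w) * of_int (- fst g2) + snd (periods w) * of_int (- snd g2),
     fst (periods w) * of_int (fst g1) + snd (periods w) * of_int (snd g1))"
  by (simp add: period_eq_inner_periods[OF assms] inner_prod_def)

lemma period_pair_nonzero:
  assumes "closed_form w" "\<not> exact_form w" "hom_generators g1 g2"
  shows "(- period w g2, period w g1) \<noteq> 0"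
proof
  let ?g1 = "(of_int (fst g1), of_int (snd g1)) :: real \<times> real"
  let ?g2 = "(of_int (fst g2), of_int (snd g2)) :: real \<times> real"
  assume "(- period w g2, period w g1) = 0"
  then have "?g1 \<bullet> periods w = 0" "?g2 \<bullet> periods w = 0"
    by (simp_all add: period_eq_inner_periods[OF assms(1)] inner_commute zero_prod_def)
  moreover have "periods w \<noteq> 0"
    using assms(1,2) exact_form_if_periods_eq_0 by blast
  ultimately have "wedge ?g1 ?g2 = 0"
    by (rule wedge_eq_0_if_orthogonal)
  then have "fst g1 * snd g2 - snd g1 * fst g2 = 0"
    unfolding wedge_def by (metis fst_conv snd_conv of_int_0_eq_iff of_int_diff of_int_mult)
  with assms(3) show False
    by (simp add: hom_generators_def)
qed

lemma diophantine_period_pair_iff: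
  assumes "closed_form w" "hom_generators g1 g2"
  shows "diophantine (- period w g2, period w g1) \<longleftrightarrow> diophantine (periods w)"
  unfolding period_pair_eq[OF assms(1)]
  by (rule diophantine_int_transform_iff) (use assms(2) in \<open>simp add: hom_generators_def algebra_simps\<close>)

lemma proj_eq_period_pairs_if_annihilates_dense:
  assumes "closure {p. X p \<noteq> 0} = UNIV" "hom_generators g1 g2" "closed_form \<omega>" "closed_form \<eta>"
    "\<not> exact_form \<omega>" "\<not> exact_form \<eta>" "annihilates \<omega> X" "annihilates \<eta> X"
  shows "proj_eq (- period \<omega> g2, period \<omega> g1) (- period \<eta> g2, period \<eta> g1)"
proof -
  obtain l where l: "periods \<omega> = l *\<^sub>R periods \<eta>"
    using periods_parallel_if_annihilates_dense[OF assms(1,3-8)] by blast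
  have "(- period \<omega> g2, period \<omega> g1) = l *\<^sub>R (- period \<eta> g2, period \<eta> g1)"
    using assms(3,4) by (simp add: period_eq_inner_periods l)
  with period_pair_nonzero[OF assms(3,5,2)] period_pair_nonzero[OF assms(4,6,2)] show ?thesis
    unfolding proj_eq_def by blast
qed

lemma diophantine_period_pairs_iff_if_annihilates_dense:
  assumes "closure {p. X p \<noteq> 0} = UNIV" "hom_generators g1 g2" "hom_generators h1 h2"
    "closed_form \<omega>" "closed_form \<eta>" "\<not> exact_form \<omega>" "\<not> exact_form \<eta>"
    "annihilates \<omega> X" "annihilates \<eta> X"
  shows "diophantine (- period \<omega> g2, period \<omega> g1) \<longleftrightarrow> diophantine (- period \<eta> h2, period \<eta> h1)"
proof -
  obtain l where "l \<noteq> 0" "periods \<omega> = l *\<^sub>R periods \<eta>"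
    using periods_parallel_if_annihilates_dense[OF assms(1,4-9)] by blast
  then show ?thesis
    by (simp add: diophantine_period_pair_iff[OF assms(4,2)] diophantine_period_pair_iff[OF assms(5,3)]
        diophantine_scaleR_iff)
qed

theorem proposition10:
  shows "(\<forall>\<omega>0. closed_form \<omega>0 \<and> (\<forall>p. \<omega>0 p \<noteq> 0) \<longrightarrow> \<not> exact_form \<omega>0) \<and>
    (\<forall>X \<omega> \<eta> g1 g2. smooth_field X \<and> closure {p. X p \<noteq> 0} = UNIV \<and>
        hom_generators g1 g2 \<and>
        closed_form \<omega> \<and> closed_form \<eta> \<and> \<not> exact_form \<omega> \<and> \<not> exact_form \<eta> \<and>
        annihilates \<omega> X \<and> annihilates \<eta> X \<longrightarrow>
        (- period \<omega> g2, period \<omega> g1) \<noteq> 0 \<and> (- period \<eta> g2, period \<eta> g1) \<noteq> 0 \<and>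
        proj_eq (- period \<omega> g2, period \<omega> g1) (- period \<eta> g2, period \<eta> g1)) \<and>
    (\<forall>X \<omega> \<eta> g1 g2 h1 h2. smooth_field X \<and> closure {p. X p \<noteq> 0} = UNIV \<and>
        hom_generators g1 g2 \<and> hom_generators h1 h2 \<and>
        closed_form \<omega> \<and> closed_form \<eta> \<and> \<not> exact_form \<omega> \<and> \<not> exact_form \<eta> \<and>
        annihilates \<omega> X \<and> annihilates \<eta> X \<longrightarrow>
        (diophantine (- period \<omega> g2, period \<omega> g1) \<longleftrightarrow>
         diophantine (- period \<eta> h2, period \<eta> h1)))"
proof (intro conjI allI impI; elim conjE)
  show "\<not> exact_form \<omega>0" if "\<forall>p. \<omega>0 p \<noteq> 0" for \<omega>0
    using that exact_form_vanishes by metis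
qed (use period_pair_nonzero proj_eq_period_pairs_if_annihilates_dense
    diophantine_period_pairs_iff_if_annihilates_dense in blast)+

end
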